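(* Let $p$ be an odd prime and $0\le k\le\frac{p-1}{2}$. Then $$\begin{bmatrix}\frac{p-1}{2}+k\\2k\end{bmatrix}_{q^2}\equiv(-1)^k\begin{bmatrix}2k\\k\end{bmatrix}_{q^2}\frac{q^{kp-k^2}}{(-q;q)_{2k}^2}\pmod{[p]^2}.$$
   Context: For an indeterminate $q$ and an integer $n\ge 0$: $(a;q)_0=1$ and $(a;q)_n=(1-a)(1-aq)\cdots(1-aq^{n-1})$. The $q$-binomial coefficient is $\begin{bmatrix}n\\k\end{bmatrix}_q=\frac{(q^{n-k+1};q)_k}{(q;q)_k}$ if $0\le k\le n$ and $0$ otherwise. For a positive integer $p$, $[p]=\frac{1-q^p}{1-q}=1+q+\cdots+q^{p-1}$. For a prime $p$, $[p]$ is irreducible in $\mathbb{Q}[q]$; for rational functions $A,B$ of $q$ whose denominators are coprime to $[p]$, $A\equiv B\pmod{[p]^r}$ means that $A-B$, written in lowest terms, has numerator divisible by $[p]^r$ in $\mathbb{Q}[q]$. *)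

theory Defs
  imports "HOL-Computational_Algebra.Computational_Algebra"
          "HOL-Computational_Algebra.Normalized_Fraction"
          "HOL-Computational_Algebra.Field_as_Ring"
begin

text \<open>Rational functions in the indeterminate q are elements of the fraction field of rat poly.\<close>

type_synonym ratfun = "rat poly fract"

definition qvar :: ratfun where
  "qvar = to_fract [:0, 1:]"

definition qpoch :: "'a::field \<Rightarrow> 'a \<Rightarrow> nat \<Rightarrow> 'a" where
  "qpoch a x n = (\<Prod>i<n. (1 - a * x ^ i))"

definition qbinom :: "'a::field \<Rightarrow> nat \<Rightarrow> nat \<Rightarrow> 'a" where
  "qbinom x n k = (if k \<le> n then qpoch (x ^ (n - k + 1)) x k / qpoch x x k else 0)"

definition qint :: "nat \<Rightarrow> rat poly" where
  "qint p = (\<Sum>i<p. monom 1 i)"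

definition qcong :: "nat \<Rightarrow> nat \<Rightarrow> ratfun \<Rightarrow> ratfun \<Rightarrow> bool" where
  "qcong p r A B \<longleftrightarrow>
     coprime (snd (quot_of_fract A)) (qint p) \<and>
     coprime (snd (quot_of_fract B)) (qint p) \<and>
     qint p ^ r dvd fst (quot_of_fract (A - B))"

end

theory Submission
  imports Defs
begin

text \<open>
  Write X for the indeterminate q as a polynomial, (X^a;X^2)_m for the product of the
  factors 1 - X^(a+2i), i < m, and (-X;X)_m for the product of the factors 1 + X^(i+1).
  With D = (X^2;X^2)_{2k} = (X^2;X^2)_k (X;X^2)_k (-X;X)_{2k}, both sides of the claimed
  congruence become fractions with the common denominator D:
    LHS * D = (X^(p+1-2k);X^2)_{2k}   and   RHS * D = (-1)^k X^(k(p-k)) (X;X^2)_k^2.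
  The heart of the proof is the polynomial congruence
    (X^(p+1-2k);X^2)_{2k} == (-1)^k X^(k(p-k)) (X;X^2)_k^2   (mod [p]^2)   for 2k < p,
  proved by induction on k: passing from k to k+1 multiplies the two sides by
  (1-a)(1-ab^2) and by -a(1-b)^2 respectively, where a = X^(p-1-2k), b = X^(2k+1), and the
  difference of these factors is (1-ab)^2 = (1-X^p)^2, which is divisible by [p]^2.
  Finally every factor of D is of the form 1 - X^j or 1 + X^j with p not dividing j
  (resp. 2j), hence coprime to [p], and a common-denominator criterion for the
  congruence of rational functions finishes the proof.
\<close>

definition qx :: "rat poly" where
  "qx = [:0, 1:]"

lemma qvar_eq_to_fract: "qvar = to_fract qx"
  by (simp add: qvar_def qx_def)

lemma poly_qx [simp]: "poly qx x = x"
  by (simp add: qx_def)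

lemma qint_eq_sum_powers: "qint p = (\<Sum>i<p. qx ^ i)"
  by (simp add: qint_def qx_def monom_altdef)

lemma one_minus_qx_power: "1 - qx ^ p = (1 - qx) * qint p"
  by (simp add: qint_eq_sum_powers one_diff_power_eq)

lemma to_fract_power: "to_fract (x ^ n) = to_fract x ^ n"
  by (induction n) simp_all

lemma to_fract_prod: "to_fract (prod f A) = (\<Prod>x\<in>A. to_fract (f x))"
  by (induction A rule: infinite_finite_induct) simp_all

lemma quot_of_fract_cross_mult:
  fixes Y :: "'a :: {ring_gcd, idom_divide, semiring_gcd_mult_normalize} fract"
  assumes "Y * to_fract D = to_fract N"
  shows "fst (quot_of_fract Y) * D = N * snd (quot_of_fract Y)"
proof -
  define a b where "a = fst (quot_of_fract Y)" and "b = snd (quot_of_fract Y)"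
  have "b \<noteq> 0" by (simp add: b_def)
  have "Y = to_fract a / to_fract b"
    unfolding a_def b_def by (metis Fract_conv_to_fract Fract_quot_of_fract)
  with assms \<open>b \<noteq> 0\<close> have "to_fract a * to_fract D = to_fract N * to_fract b"
    by (simp add: divide_simps)
  then show ?thesis by (metis a_def b_def to_fract_eq_iff to_fract_mult)
qed

lemma qcong_by_common_denominator:
  assumes A: "A * to_fract D = to_fract M" and B: "B * to_fract D = to_fract N"
    and coprime_D: "coprime D (qint p)" and dvd: "qint p ^ r dvd M - N"
  shows "qcong p r A B"
proof -
  have denominator_coprime: "coprime (snd (quot_of_fract Y)) (qint p)"
    if "Y * to_fract D = to_fract L" for Y L
  proof -
    have "snd (quot_of_fract Y) dvd fst (quot_of_fract Y) * D"
      unfolding quot_of_fract_cross_mult[OF that] by simp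
    then have "snd (quot_of_fract Y) dvd D"
      by (metis coprime_commute coprime_dvd_mult_right_iff coprime_quot_of_fract)
    then show ?thesis using coprime_D by (meson coprime_divisors dvd_refl)
  qed
  have "(A - B) * to_fract D = to_fract (M - N)"
    using A B by (simp add: left_diff_distrib)
  then have "fst (quot_of_fract (A - B)) * D = (M - N) * snd (quot_of_fract (A - B))"
    by (rule quot_of_fract_cross_mult)
  then have "qint p ^ r dvd fst (quot_of_fract (A - B)) * D"
    using dvd by (metis dvd_mult2)
  moreover have "coprime D (qint p ^ r)"
    using coprime_D by simp
  ultimately have "qint p ^ r dvd fst (quot_of_fract (A - B))"
    by (metis coprime_commute coprime_dvd_mult_left_iff)
  then show ?thesis
    unfolding qcong_def using denominator_coprime A B by blast
qed

text \<open>A common divisor of 1 - y^j and 1 - y^m with coprime exponents divides 1 - y (Bezout).\<close>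
lemma common_divisor_one_minus_powers:
  fixes d y :: "'a :: comm_ring_1"
  assumes "d dvd 1 - y ^ j" "d dvd 1 - y ^ m" "coprime j m" "j > 0"
  shows "d dvd 1 - y"
proof -
  obtain e u v where "e dvd j" "e dvd m" and bezout: "j * u = m * v + e"
    using bezout_add_strong_nat[of j m] \<open>j > 0\<close> by blast
  then have "e = 1"
    using \<open>coprime j m\<close> coprime_common_divisor_nat by blast
  have one_minus_power_dvd: "1 - x dvd 1 - x ^ n" for x :: 'a and n
    by (metis dvd_triv_left one_diff_power_eq)
  have "d dvd 1 - (y ^ j) ^ u"
    using assms(1) one_minus_power_dvd dvd_trans by blast
  then have d1: "d dvd 1 - y * y ^ (m * v)"
    using bezout \<open>e = 1\<close> by (simp add: power_mult[symmetric] power_add mult.commute)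
  have "d dvd 1 - (y ^ m) ^ v"
    using assms(2) one_minus_power_dvd dvd_trans by blast
  then have d2: "d dvd y * (1 - y ^ (m * v))"
    by (simp add: power_mult)
  have "(1 - y * y ^ (m * v)) - y * (1 - y ^ (m * v)) = 1 - y"
    by (simp add: algebra_simps)
  with dvd_diff[OF d1 d2] show ?thesis
    by (simp only:)
qed

text \<open>Since [p] evaluates to p at q = 1, the polynomial 1 - q divides [p] - p.\<close>
lemma one_minus_qx_dvd_qint_minus_p: "1 - qx dvd qint p - of_nat p"
proof -
  have "poly (qint p - of_nat p) 1 = 0"
    by (simp add: qint_eq_sum_powers poly_sum of_nat_poly)
  then have "[:-1, 1:] dvd qint p - of_nat p"
    by (simp only: poly_eq_0_iff_dvd)
  moreover have "1 - qx = - [:-1, 1:]"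
    by (simp add: qx_def one_pCons)
  ultimately show ?thesis
    by (simp only: minus_dvd_iff)
qed

text \<open>For p prime and p not dividing j, 1 - q^j is coprime to [p]: a common divisor divides
  1 - q and hence the unit p.\<close>
lemma coprime_one_minus_qx_power_qint:
  assumes "prime p" "\<not> p dvd j"
  shows "coprime (1 - qx ^ j) (qint p)"
proof (rule coprimeI)
  fix d assume dj: "d dvd 1 - qx ^ j" and dp: "d dvd qint p"
  have "j > 0"
    using assms(2) by (auto intro: Nat.gr0I)
  moreover have "coprime j p"
    using prime_imp_coprime[OF assms] by (simp add: coprime_commute)
  moreover have "d dvd 1 - qx ^ p"
    using dp by (simp add: one_minus_qx_power)
  ultimately have "d dvd 1 - qx"
    using dj common_divisor_one_minus_powers by blast
  then have "d dvd qint p - of_nat p"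
    using one_minus_qx_dvd_qint_minus_p dvd_trans by blast
  then have "d dvd qint p - (qint p - of_nat p)"
    using dp by (rule dvd_diff[rotated])
  then have "d dvd [:of_nat p:]"
    by (simp add: of_nat_poly)
  moreover have "is_unit [:(of_nat p :: rat):]"
    using prime_gt_0_nat[OF assms(1)] by (simp add: is_unit_const_poly_iff dvd_field_iff)
  ultimately show "is_unit d"
    using dvd_unit_imp_unit by blast
qed

text \<open>Likewise 1 + q^j for odd p, since it divides 1 - q^(2j).\<close>
lemma coprime_one_plus_qx_power_qint:
  assumes "prime p" "odd p" "\<not> p dvd j"
  shows "coprime (1 + qx ^ j) (qint p)"
proof -
  have "\<not> p dvd 2"
  proof
    assume "p dvd 2"
    then have "p \<le> 2"
      by (rule dvd_imp_le) simp
    then have "p = 2"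
      using prime_ge_2_nat[OF assms(1)] by simp
    then show False
      using assms(2) by simp
  qed
  then have "\<not> p dvd 2 * j"
    using assms(1,3) by (simp add: prime_dvd_mult_iff)
  then have "coprime (1 - qx ^ (2 * j)) (qint p)"
    by (rule coprime_one_minus_qx_power_qint[OF assms(1)])
  moreover have "1 + qx ^ j dvd 1 - qx ^ (2 * j)"
  proof
    show "1 - qx ^ (2 * j) = (1 + qx ^ j) * (1 - qx ^ j)"
      by (simp add: mult_2 power_add ring_distribs)
  qed
  ultimately show ?thesis
    by (meson coprime_divisors dvd_refl)
qed

definition qpoch_sq :: "nat \<Rightarrow> nat \<Rightarrow> rat poly" where
  "qpoch_sq a m = (\<Prod>i<m. 1 - qx ^ (a + 2 * i))"

definition neg_qpoch :: "nat \<Rightarrow> rat poly" where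
  "neg_qpoch m = (\<Prod>i<m. 1 + qx ^ (i + 1))"

lemma qpoch_sq_0 [simp]: "qpoch_sq a 0 = 1"
  by (simp add: qpoch_sq_def)

lemma qpoch_sq_Suc: "qpoch_sq a (Suc m) = qpoch_sq a m * (1 - qx ^ (a + 2 * m))"
  by (simp add: qpoch_sq_def)

lemma qpoch_sq_Suc_shift: "qpoch_sq a (Suc m) = (1 - qx ^ a) * qpoch_sq (a + 2) m"
  unfolding qpoch_sq_def prod.lessThan_Suc_shift by (simp add: add.assoc)

lemma qpoch_sq_add: "qpoch_sq a (m + l) = qpoch_sq a m * qpoch_sq (a + 2 * m) l"
  by (induction l) (simp_all add: qpoch_sq_Suc algebra_simps)

lemma neg_qpoch_Suc: "neg_qpoch (Suc m) = neg_qpoch m * (1 + qx ^ (m + 1))"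
  by (simp add: neg_qpoch_def)

text \<open>Both products have constant term 1, hence do not vanish.\<close>
lemma qpoch_sq_nonzero: "a > 0 \<Longrightarrow> qpoch_sq a m \<noteq> 0"
proof -
  assume "a > 0"
  then have "poly (qpoch_sq a m) 0 = 1"
    by (simp add: qpoch_sq_def poly_prod power_0_left)
  then show ?thesis by auto
qed

lemma neg_qpoch_nonzero: "neg_qpoch m \<noteq> 0"
proof -
  have "poly (neg_qpoch m) 0 = 1"
    by (simp add: neg_qpoch_def poly_prod)
  then show ?thesis by auto
qed

lemma coprime_qpoch_sq_qint:
  assumes "prime p" "a > 0" "a + 2 * m \<le> p + 1"
  shows "coprime (qpoch_sq a m) (qint p)"
  unfolding qpoch_sq_def
proof (rule prod_coprime_left)
  fix i assume "i \<in> {..<m}"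
  then have "0 < a + 2 * i" "a + 2 * i < p"
    using assms(2,3) by simp_all
  then have "\<not> p dvd a + 2 * i"
    by (rule nat_dvd_not_less)
  then show "coprime (1 - qx ^ (a + 2 * i)) (qint p)"
    by (rule coprime_one_minus_qx_power_qint[OF assms(1)])
qed

lemma coprime_neg_qpoch_qint:
  assumes "prime p" "odd p" "m < p"
  shows "coprime (neg_qpoch m) (qint p)"
  unfolding neg_qpoch_def
proof (rule prod_coprime_left)
  fix i assume "i \<in> {..<m}"
  then have "i + 1 < p"
    using assms(3) by simp
  then have "\<not> p dvd i + 1"
    by (rule nat_dvd_not_less[rotated]) simp
  then show "coprime (1 + qx ^ (i + 1)) (qint p)"
    by (rule coprime_one_plus_qx_power_qint[OF assms(1,2)])
qed

text \<open>(q^(2k+2);q^2)_k = (q;q^2)_k (-q;q)_{2k}: pair each factor 1 - q^(2j) with 1 - q^j and 1 + q^j.\<close>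
lemma qpoch_sq_even_split: "qpoch_sq (2 * k + 2) k = qpoch_sq 1 k * neg_qpoch (2 * k)"
proof (induction k)
  case 0
  then show ?case by (simp add: neg_qpoch_def)
next
  case (Suc k)
  have square_diff: "1 - qx ^ (2 * j) = (1 - qx ^ j) * (1 + qx ^ j)" for j
    by (simp add: mult_2 power_add ring_distribs)
  have "(1 - qx ^ (2 * k + 2)) * qpoch_sq (2 * Suc k + 2) (Suc k)
      = qpoch_sq (2 * k + 2) (Suc (Suc k))"
    by (simp add: qpoch_sq_Suc_shift)
  also have "\<dots> = qpoch_sq (2 * k + 2) k * (1 - qx ^ (2 * (2 * k + 1))) * (1 - qx ^ (2 * (2 * k + 2)))"
    by (simp add: qpoch_sq_Suc algebra_simps)
  also have "\<dots> = (qpoch_sq 1 k * (1 - qx ^ (2 * k + 1))) * (neg_qpoch (2 * k) * (1 + qx ^ (2 * k + 1))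
                  * (1 + qx ^ (2 * k + 2))) * (1 - qx ^ (2 * k + 2))"
    unfolding Suc.IH square_diff by (simp only: ac_simps)
  also have "\<dots> = (1 - qx ^ (2 * k + 2)) * (qpoch_sq 1 (Suc k) * neg_qpoch (2 * Suc k))"
    by (simp add: qpoch_sq_Suc neg_qpoch_Suc)
  moreover have "1 - qx ^ (2 * k + 2) \<noteq> 0"
    using qpoch_sq_nonzero[of "2 * k + 2" 1] by (simp add: qpoch_sq_def)
  ultimately show ?case
    by simp
qed

lemma qpoch_qvar_sq: "qpoch ((qvar ^ 2) ^ c) (qvar ^ 2) m = to_fract (qpoch_sq (2 * c) m)"
  unfolding qpoch_def qpoch_sq_def to_fract_prod
proof (rule prod.cong[OF refl])
  fix i
  have "(qvar ^ 2) ^ c * (qvar ^ 2) ^ i = qvar ^ (2 * c + 2 * i)"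
    by (simp only: power_mult[symmetric] power_add)
  then show "1 - (qvar ^ 2) ^ c * (qvar ^ 2) ^ i = to_fract (1 - qx ^ (2 * c + 2 * i))"
    by (simp add: to_fract_power qvar_eq_to_fract)
qed

lemma qpoch_neg_qvar: "qpoch (- qvar) qvar m = to_fract (neg_qpoch m)"
  unfolding qpoch_def neg_qpoch_def to_fract_prod
  by (rule prod.cong[OF refl]) (simp add: to_fract_power qvar_eq_to_fract)

definition central_denom :: "nat \<Rightarrow> rat poly" where
  "central_denom k = qpoch_sq 2 k * qpoch_sq 1 k * neg_qpoch (2 * k)"

lemma central_denom_eq: "central_denom k = qpoch_sq 2 (2 * k)"
proof -
  have "qpoch_sq 2 (2 * k) = qpoch_sq 2 k * qpoch_sq (2 * k + 2) k"
    using qpoch_sq_add[of 2 k k] by (simp only: mult_2 add.commute)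
  then show ?thesis
    by (simp only: central_denom_def qpoch_sq_even_split mult.assoc)
qed

lemma central_denom_nonzero: "central_denom k \<noteq> 0"
  by (simp add: central_denom_eq qpoch_sq_nonzero)

lemma coprime_central_denom_qint:
  assumes "prime p" "odd p" "2 * k < p"
  shows "coprime (central_denom k) (qint p)"
  using assms unfolding central_denom_def
  by (simp add: coprime_qpoch_sq_qint coprime_neg_qpoch_qint)

lemma qbinom_upper_cleared:
  assumes "k \<le> n"
  shows "qbinom (qvar ^ 2) (n + k) (2 * k) * to_fract (central_denom k)
           = to_fract (qpoch_sq (2 * (n - k + 1)) (2 * k))"
proof -
  have "qbinom (qvar ^ 2) (n + k) (2 * k)
          = qpoch ((qvar ^ 2) ^ (n - k + 1)) (qvar ^ 2) (2 * k) / qpoch ((qvar ^ 2) ^ 1) (qvar ^ 2) (2 * k)"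
    using assms by (simp add: qbinom_def Suc_diff_le)
  also have "\<dots> = to_fract (qpoch_sq (2 * (n - k + 1)) (2 * k)) / to_fract (central_denom k)"
    by (simp only: qpoch_qvar_sq central_denom_eq mult_1_right)
  finally show ?thesis
    using central_denom_nonzero by simp
qed

lemma qbinom_central_cleared:
  "qbinom (qvar ^ 2) (2 * k) k * to_fract (qpoch_sq 2 k)
     = to_fract (qpoch_sq 1 k * neg_qpoch (2 * k))"
proof -
  have "qbinom (qvar ^ 2) (2 * k) k
          = qpoch ((qvar ^ 2) ^ (k + 1)) (qvar ^ 2) k / qpoch ((qvar ^ 2) ^ 1) (qvar ^ 2) k"
    by (simp add: qbinom_def)
  also have "\<dots> = to_fract (qpoch_sq 1 k * neg_qpoch (2 * k)) / to_fract (qpoch_sq 2 k)"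
    by (simp only: qpoch_qvar_sq distrib_left mult_1_right qpoch_sq_even_split)
  finally show ?thesis
    using qpoch_sq_nonzero[of 2 k] by simp
qed

definition twisted_square :: "nat \<Rightarrow> nat \<Rightarrow> rat poly" where
  "twisted_square p k = (-1) ^ k * qx ^ (k * (p - k)) * qpoch_sq 1 k ^ 2"

lemma central_rhs_cleared:
  "(-1) ^ k * qbinom (qvar ^ 2) (2 * k) k * qvar ^ (k * p - k ^ 2)
      / qpoch (- qvar) qvar (2 * k) ^ 2 * to_fract (central_denom k)
    = to_fract (twisted_square p k)"
proof -
  define Ev Od C where "Ev = to_fract (qpoch_sq 2 k)" and "Od = to_fract (qpoch_sq 1 k)"
    and "C = to_fract (neg_qpoch (2 * k))"
  have "C \<noteq> 0"
    by (simp add: C_def neg_qpoch_nonzero)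
  have exponent: "k * p - k ^ 2 = k * (p - k)"
    by (simp add: power2_eq_square diff_mult_distrib2)
  have "(-1) ^ k * qbinom (qvar ^ 2) (2 * k) k * qvar ^ (k * p - k ^ 2)
          / qpoch (- qvar) qvar (2 * k) ^ 2 * to_fract (central_denom k)
        = (-1) ^ k * (qbinom (qvar ^ 2) (2 * k) k * Ev) * qvar ^ (k * (p - k)) * Od * C / C ^ 2"
    by (simp add: exponent qpoch_neg_qvar central_denom_def Ev_def Od_def C_def)
  also have "\<dots> = (-1) ^ k * (Od * C) * qvar ^ (k * (p - k)) * Od * C / C ^ 2"
    using qbinom_central_cleared[of k] by (simp only: Ev_def Od_def C_def to_fract_mult)
  also have "\<dots> = (-1) ^ k * qvar ^ (k * (p - k)) * Od ^ 2"
    using \<open>C \<noteq> 0\<close> by (simp add: power2_eq_square)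
  also have "\<dots> = to_fract (twisted_square p k)"
    by (simp add: twisted_square_def Od_def qvar_eq_to_fract to_fract_power)
  finally show ?thesis .
qed

lemma qpoch_sq_add_two:
  "qpoch_sq c (m + 2) = (1 - qx ^ c) * (1 - qx ^ (c + 2 * (m + 1))) * qpoch_sq (c + 2) m"
proof -
  have "qpoch_sq c (m + 2) = (1 - qx ^ c) * qpoch_sq (c + 2) (Suc m)"
    using qpoch_sq_Suc_shift[of c "Suc m"] by (simp only: add_2_eq_Suc')
  also have "\<dots> = (1 - qx ^ c) * (qpoch_sq (c + 2) m * (1 - qx ^ (c + 2 * (m + 1))))"
    by (simp add: qpoch_sq_Suc)
  finally show ?thesis
    by (simp only: ac_simps)
qed

lemma twisted_square_Suc:
  assumes "2 * k < p"
  shows "twisted_square p (Suc k)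
           = - (qx ^ (p - 1 - 2 * k) * (1 - qx ^ (2 * k + 1)) ^ 2) * twisted_square p k"
proof -
  obtain t where p: "p = Suc (2 * k + t)"
    using less_imp_Suc_add[OF assms] by blast
  have exponent: "Suc k * (p - Suc k) = (p - 1 - 2 * k) + k * (p - k)"
    unfolding p by (simp add: algebra_simps)
  have "twisted_square p (Suc k)
          = (-1) ^ Suc k * qx ^ ((p - 1 - 2 * k) + k * (p - k)) * (qpoch_sq 1 k * (1 - qx ^ (1 + 2 * k))) ^ 2"
    by (simp only: twisted_square_def exponent qpoch_sq_Suc)
  then show ?thesis
    by (simp add: twisted_square_def power_add power_mult_distrib ac_simps)
qed

text \<open>The two recursion factors differ by a perfect square: with ab = q^p this is (1 - q^p)^2.\<close>
lemma square_defect_identity: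
  fixes a b :: "'a :: comm_ring_1"
  shows "(1 - a) * (1 - a * b ^ 2) - (- a * (1 - b) ^ 2) = (1 - a * b) ^ 2"
  by (simp add: power2_eq_square algebra_simps)

lemma dvd_mult_diff_cong:
  fixes m :: "'a :: comm_ring_1"
  assumes "m dvd N - R" "m dvd F - G"
  shows "m dvd F * N - G * R"
proof -
  have "F * N - G * R = F * (N - R) + (F - G) * R"
    by (simp add: algebra_simps)
  then show ?thesis
    using assms by (simp add: dvd_add dvd_mult dvd_mult2)
qed

lemma qpoch_sq_twisted_congruence:
  "2 * k < p \<Longrightarrow> qint p ^ 2 dvd qpoch_sq (p + 1 - 2 * k) (2 * k) - twisted_square p k"
proof (induction k)
  case 0
  then show ?case by (simp add: twisted_square_def)
next
  case (Suc k)
  define c where "c = p - 1 - 2 * k"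
  define a b where "a = qx ^ c" and "b = qx ^ (2 * k + 1)"
  have "c + (2 * k + 1) = p"
    using Suc.prems by (simp add: c_def)
  then have "a * b = qx ^ p"
    unfolding a_def b_def by (metis power_add)
  then have "(1 - a) * (1 - a * b ^ 2) - (- a * (1 - b) ^ 2) = ((1 - qx) * qint p) ^ 2"
    by (simp only: square_defect_identity one_minus_qx_power)
  then have factor_cong: "qint p ^ 2 dvd (1 - a) * (1 - a * b ^ 2) - (- a * (1 - b) ^ 2)"
    by (simp add: power_mult_distrib)
  have a_b_sq: "a * b ^ 2 = qx ^ (c + 2 * (2 * k + 1))"
    unfolding a_def b_def by (metis power_add power_mult mult.commute)
  have "qpoch_sq (p + 1 - 2 * Suc k) (2 * Suc k) = qpoch_sq c (2 * k + 2)"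
    using Suc.prems by (simp add: c_def)
  also have "\<dots> = (1 - a) * (1 - a * b ^ 2) * qpoch_sq (c + 2) (2 * k)"
    by (simp only: qpoch_sq_add_two flip: a_b_sq a_def)
  also have "c + 2 = p + 1 - 2 * k"
    using Suc.prems by (simp add: c_def)
  finally have "qpoch_sq (p + 1 - 2 * Suc k) (2 * Suc k)
                  = (1 - a) * (1 - a * b ^ 2) * qpoch_sq (p + 1 - 2 * k) (2 * k)" .
  moreover have "twisted_square p (Suc k) = (- a * (1 - b) ^ 2) * twisted_square p k"
    using twisted_square_Suc[of k p] Suc.prems by (simp add: a_def b_def c_def)
  ultimately show ?case
    using dvd_mult_diff_cong[OF Suc.IH factor_cong] Suc.prems by simp
qed

theorem lemma3p1:
  fixes p k :: nat
  assumes "prime p" and "odd p" and "k \<le> (p - 1) div 2"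
  shows "qcong p 2
           (qbinom (qvar ^ 2) ((p - 1) div 2 + k) (2 * k))
           ((-1) ^ k * qbinom (qvar ^ 2) (2 * k) k * qvar ^ (k * p - k ^ 2)
              / (qpoch (- qvar) qvar (2 * k)) ^ 2)"
proof -
  define n where "n = (p - 1) div 2"
  have p_eq: "p = 2 * n + 1"
    using assms(2) unfolding n_def by presburger
  have "k \<le> n"
    using assms(3) by (simp only: n_def)
  then have "2 * k < p"
    using p_eq by simp
  have upper_start: "2 * (n - k + 1) = p + 1 - 2 * k"
    using \<open>k \<le> n\<close> p_eq by simp
  show ?thesis
    unfolding n_def[symmetric]
  proof (rule qcong_by_common_denominator)
    show "qbinom (qvar ^ 2) (n + k) (2 * k) * to_fract (central_denom k)
            = to_fract (qpoch_sq (p + 1 - 2 * k) (2 * k))"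
      using qbinom_upper_cleared[OF \<open>k \<le> n\<close>] by (simp only: upper_start)
    show "(-1) ^ k * qbinom (qvar ^ 2) (2 * k) k * qvar ^ (k * p - k ^ 2)
            / qpoch (- qvar) qvar (2 * k) ^ 2 * to_fract (central_denom k)
            = to_fract (twisted_square p k)"
      by (rule central_rhs_cleared)
    show "coprime (central_denom k) (qint p)"
      using assms(1,2) \<open>2 * k < p\<close> by (rule coprime_central_denom_qint)
    show "qint p ^ 2 dvd qpoch_sq (p + 1 - 2 * k) (2 * k) - twisted_square p k"
      using \<open>2 * k < p\<close> by (rule qpoch_sq_twisted_congruence)
  qed
qed

end
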